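(* Let $(X,d)$ be a compact metric space and $F:X\to 2^X$ an onto, continuous set-valued map. If $F$ has the shadowing property, then $F^{-1}$ also has the shadowing property.
   Context: $2^X$ is the family of nonempty compact subsets of $X$ with Hausdorff metric $d_H$. A set-valued map $F$ is upper semicontinuous if for every $x$ and open $U\supset F(x)$ there is a neighborhood $V$ of $x$ with $F(y)\subset U$ for $y\in V$; lower semicontinuous if for every $x$ and open $U$ with $F(x)\cap U\ne\emptyset$ there is a neighborhood $V$ of $x$ with $F(y)\cap U\neq\emptyset$ for $y\in V$; continuous if both. $F$ is onto if every $y\in X$ lies in $F(x)$ for some $x$; then $F^{-1}(y)=\{x: y\in F(x)\}$ defines a set-valued map $F^{-1}:X\to 2^X$. For a set-valued map $G$, a $\delta$-pseudo-orbit is a sequence $\{x_n\}_{n\ge0}$ with $d(x_{n+1},G(x_n))<\delta$ for all $n$; a $G$-orbit is a sequence $(y_n)$ with $y_{n+1}\in G(y_n)$ for all $n$; $G$ has the shadowing property if for every $\varepsilon>0$ there is $\delta>0$ such that every $\delta$-pseudo-orbit $\{x_n\}$ admits a $G$-orbit $(y_n)$ with $d(x_n,y_n)<\varepsilon$ for all $n$. *)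

theory Defs
  imports "HOL-Analysis.Analysis"
begin

text \<open>Set-valued maps on the whole space (the type is the space X).
  A map into 2^X takes nonempty compact values.\<close>

definition setval_map :: "('a::metric_space \<Rightarrow> 'a set) \<Rightarrow> bool" where
  "setval_map F \<longleftrightarrow> (\<forall>x. F x \<noteq> {} \<and> compact (F x))"

definition usc :: "('a::topological_space \<Rightarrow> 'b::topological_space set) \<Rightarrow> bool" where
  "usc F \<longleftrightarrow> (\<forall>x U. open U \<and> F x \<subseteq> U \<longrightarrow>
      (\<exists>V. open V \<and> x \<in> V \<and> (\<forall>y\<in>V. F y \<subseteq> U)))"

definition lsc :: "('a::topological_space \<Rightarrow> 'b::topological_space set) \<Rightarrow> bool" where
  "lsc F \<longleftrightarrow> (\<forall>x U. open U \<and> F x \<inter> U \<noteq> {} \<longrightarrow>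
      (\<exists>V. open V \<and> x \<in> V \<and> (\<forall>y\<in>V. F y \<inter> U \<noteq> {})))"

definition setval_continuous :: "('a::topological_space \<Rightarrow> 'b::topological_space set) \<Rightarrow> bool" where
  "setval_continuous F \<longleftrightarrow> usc F \<and> lsc F"

definition setval_onto :: "('a \<Rightarrow> 'b set) \<Rightarrow> bool" where
  "setval_onto F \<longleftrightarrow> (\<forall>y. \<exists>x. y \<in> F x)"

definition setval_inverse :: "('a \<Rightarrow> 'b set) \<Rightarrow> 'b \<Rightarrow> 'a set" where
  "setval_inverse F y = {x. y \<in> F x}"

text \<open>d(x, A) = inf of distances; A is nonempty in all uses.\<close>
definition pseudo_orbit :: "('a::metric_space \<Rightarrow> 'a set) \<Rightarrow> real \<Rightarrow> (nat \<Rightarrow> 'a) \<Rightarrow> bool" where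
  "pseudo_orbit G \<delta> xs \<longleftrightarrow> (\<forall>n. infdist (xs (Suc n)) (G (xs n)) < \<delta>)"

definition is_orbit :: "('a \<Rightarrow> 'a set) \<Rightarrow> (nat \<Rightarrow> 'a) \<Rightarrow> bool" where
  "is_orbit G ys \<longleftrightarrow> (\<forall>n. ys (Suc n) \<in> G (ys n))"

definition shadowing :: "('a::metric_space \<Rightarrow> 'a set) \<Rightarrow> bool" where
  "shadowing G \<longleftrightarrow> (\<forall>\<epsilon>>0. \<exists>\<delta>>0. \<forall>xs. pseudo_orbit G \<delta> xs \<longrightarrow>
      (\<exists>ys. is_orbit G ys \<and> (\<forall>n. dist (xs n) (ys n) < \<epsilon>)))"

end

theory Submission
  imports Defs
begin

text \<open>Compactness makes lower semicontinuity of \<open>F\<close> uniform: for every \<open>\<eta>\<close> there is \<open>\<delta>\<close> such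
  that each point of \<open>F w\<close> lies within \<open>\<eta>\<close> of \<open>F w'\<close> whenever \<open>d(w, w') < \<delta>\<close>. Hence a
  \<open>\<delta>\<close>-pseudo-orbit of \<open>F\<^sup>-\<^sup>1\<close> read backwards satisfies \<open>d(x\<^sub>n, F x\<^sub>n\<^sub>+\<^sub>1) < \<eta>\<close>, so every
  reversed initial segment, continued by an arbitrary \<open>F\<close>-orbit, is an \<open>\<eta>\<close>-pseudo-orbit of \<open>F\<close>.
  Shadowing these and reversing back gives finite \<open>F\<^sup>-\<^sup>1\<close>-orbits that \<open>\<epsilon>/2\<close>-shadow ever longer
  initial segments. The sequence space is compact, and the limit of a pointwise convergent
  subsequence is an \<open>F\<^sup>-\<^sup>1\<close>-orbit, because \<open>F\<^sup>-\<^sup>1\<close> inherits the closed graph of the upper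
  semicontinuous, closed-valued map \<open>F\<close>.\<close>

definition setval_graph :: "('a \<Rightarrow> 'b set) \<Rightarrow> ('a \<times> 'b) set" where
  "setval_graph F = {(x, y). y \<in> F x}"

lemma setval_graph_inverse:
  "setval_graph (setval_inverse F) = prod.swap -` setval_graph F"
  by (auto simp: setval_graph_def setval_inverse_def)

lemma closed_setval_graph_usc:
  fixes F :: "'a::metric_space \<Rightarrow> 'b::metric_space set"
  assumes usc: "usc F" and closed: "\<And>x. closed (F x)"
  shows "closed (setval_graph F)"
  unfolding closed_def
proof (rule open_prod_intro)
  fix ab assume "ab \<in> - setval_graph F"
  then obtain a b where ab: "ab = (a, b)" and "b \<notin> F a"
    by (auto simp: setval_graph_def)
  then obtain e where "e > 0" and e: "ball b e \<subseteq> - F a"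
    using closed[of a] by (meson ComplI open_Compl open_contains_ball)
  have "F a \<subseteq> - cball b (e/2)"
    using e \<open>e > 0\<close> by (auto simp: subset_eq)
  then obtain V where V: "open V" "a \<in> V" "\<forall>y\<in>V. F y \<subseteq> - cball b (e/2)"
    using usc unfolding usc_def by (meson closed_cball open_Compl)
  have "V \<times> ball b (e/2) \<subseteq> - setval_graph F"
    using V(3) by (force simp: setval_graph_def)
  then show "\<exists>A B. open A \<and> open B \<and> ab \<in> A \<times> B \<and> A \<times> B \<subseteq> - setval_graph F"
    using V(1,2) \<open>e > 0\<close> ab by (intro exI[of _ V] exI[of _ "ball b (e/2)"]) auto
qed

lemma closed_setval_graph_inverse:
  fixes F :: "'a::metric_space \<Rightarrow> 'b::metric_space set"
  assumes "closed (setval_graph F)"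
  shows "closed (setval_graph (setval_inverse F))"
  unfolding setval_graph_inverse
  by (rule continuous_closed_vimage[OF assms]) (intro continuous_intros)

lemma compact_UNIV_fun:
  assumes "compact (UNIV :: 'a::metric_space set)"
  shows "compact (UNIV :: ('i \<Rightarrow> 'a) set)"
  using assms compact_space_product_topology[of "\<lambda>_::'i. euclidean :: 'a topology" UNIV]
  by (simp add: compact_space_def euclidean_product_topology)

lemma infdist_lessE:
  assumes "A \<noteq> {}" "infdist x A < d"
  obtains a where "a \<in> A" "dist x a < d"
  using assms by (auto simp: infdist_notempty cINF_less_iff)

lemma lsc_eventually_infdist_less:
  fixes F :: "'a::metric_space \<Rightarrow> 'b::metric_space set"
  assumes graph: "closed (setval_graph F)" and lsc: "lsc F" and "\<eta> > 0"
    and w: "w \<longlonglongrightarrow> a" and w': "w' \<longlonglongrightarrow> a" and p: "p \<longlonglongrightarrow> q" and in_F: "\<And>k. p k \<in> F (w k)"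
  shows "eventually (\<lambda>k. infdist (p k) (F (w' k)) < \<eta>) sequentially"
proof -
  have "q \<in> F a"
    using Lim_in_closed_set[OF graph _ _ tendsto_Pair[OF w p]] in_F
    by (simp add: setval_graph_def)
  then have "F a \<inter> ball q (\<eta>/2) \<noteq> {}"
    using \<open>\<eta> > 0\<close> by auto
  then obtain V where V: "open V" "a \<in> V" "\<forall>y\<in>V. F y \<inter> ball q (\<eta>/2) \<noteq> {}"
    using lsc unfolding lsc_def by (meson open_ball)
  have "eventually (\<lambda>k. w' k \<in> V) sequentially"
    using topological_tendstoD[OF w' V(1,2)] .
  moreover have "eventually (\<lambda>k. dist (p k) q < \<eta>/2) sequentially"
    using tendstoD[OF p, of "\<eta>/2"] \<open>\<eta> > 0\<close> by simp
  ultimately show ?thesis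
  proof eventually_elim
    case (elim k)
    then obtain y where y: "y \<in> F (w' k)" "y \<in> ball q (\<eta>/2)"
      using V(3) by blast
    have "infdist (p k) (F (w' k)) \<le> dist (p k) y"
      by (rule infdist_le[OF y(1)])
    also have "\<dots> < \<eta>"
      using dist_triangle_half_l[OF elim(2), of y] y(2) by (simp add: dist_commute)
    finally show ?case .
  qed
qed

lemma uniform_lsc_compact:
  fixes F :: "'a::metric_space \<Rightarrow> 'b::metric_space set"
  assumes cpt: "compact (UNIV :: 'a set)" "compact (UNIV :: 'b set)"
    and graph: "closed (setval_graph F)" and lsc: "lsc F" and "\<eta> > 0"
  shows "\<exists>\<delta>>0. \<forall>w w' p. dist w w' < \<delta> \<longrightarrow> p \<in> F w \<longrightarrow> infdist p (F w') < \<eta>"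
proof (rule ccontr)
  assume "\<not> ?thesis"
  then have "\<forall>\<delta>>0. \<exists>w w' p. dist w w' < \<delta> \<and> p \<in> F w \<and> \<eta> \<le> infdist p (F w')"
    by (auto simp: not_less) (meson not_le)
  then have "\<forall>k::nat. \<exists>w w' p. dist w w' < inverse (Suc k) \<and> p \<in> F w \<and> \<eta> \<le> infdist p (F w')"
    by simp
  then obtain w w' p where
    close: "\<And>k. dist (w k) (w' k) < inverse (Suc k)" and
    p: "\<And>k. p k \<in> F (w k)" and far: "\<And>k. \<eta> \<le> infdist (p k) (F (w' k))"
    by metis
  have "seq_compact (UNIV :: (('a \<times> 'b) \<times> 'a) set)"
    using cpt by (simp add: compact_imp_seq_compact compact_Times flip: UNIV_Times_UNIV)
  then obtain l r where r: "strict_mono r"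
    and "((\<lambda>k. ((w k, p k), w' k)) \<circ> r) \<longlonglongrightarrow> l"
    using seq_compactE[of UNIV "\<lambda>k. ((w k, p k), w' k)"] by blast
  moreover obtain a q a' where "l = ((a, q), a')"
    by (metis prod.exhaust_sel)
  ultimately have lim: "(\<lambda>k. ((w (r k), p (r k)), w' (r k))) \<longlonglongrightarrow> ((a, q), a')"
    by (simp add: o_def)
  have wl: "(\<lambda>k. w (r k)) \<longlonglongrightarrow> a" and pl: "(\<lambda>k. p (r k)) \<longlonglongrightarrow> q"
    and w'l: "(\<lambda>k. w' (r k)) \<longlonglongrightarrow> a'"
    using tendsto_fst[OF tendsto_fst[OF lim]] tendsto_snd[OF tendsto_fst[OF lim]]
      tendsto_snd[OF lim] by simp_all
  have shrink: "(\<lambda>k. inverse (real (Suc (r k)))) \<longlonglongrightarrow> 0"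
    using LIMSEQ_subseq_LIMSEQ[OF LIMSEQ_inverse_real_of_nat r] by (simp add: o_def)
  have "\<forall>k. dist (w (r k)) (w' (r k)) \<le> inverse (Suc (r k))"
    using close less_imp_le by blast
  then have "dist a a' \<le> 0"
    by (rule tendsto_le[OF trivial_limit_sequentially shrink tendsto_dist[OF wl w'l]
          always_eventually])
  then have "(w' \<circ> r) \<longlonglongrightarrow> a"
    using w'l by (simp add: o_def)
  then have "eventually (\<lambda>k. infdist (p (r k)) (F (w' (r k))) < \<eta>) sequentially"
    using lsc_eventually_infdist_less[OF graph lsc \<open>\<eta> > 0\<close> wl _ pl p] by (simp add: o_def)
  then show False
    using far by (simp add: not_less[symmetric])
qed

lemma pseudo_orbit_inverse_backward_step:
  fixes F :: "'a::metric_space \<Rightarrow> 'a set"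
  assumes "setval_onto F"
    and unif: "\<forall>w w' p. dist w w' < \<delta> \<longrightarrow> p \<in> F w \<longrightarrow> infdist p (F w') < \<eta>"
    and pseudo: "pseudo_orbit (setval_inverse F) \<delta> xs"
  shows "infdist (xs n) (F (xs (Suc n))) < \<eta>"
proof -
  have "setval_inverse F (xs n) \<noteq> {}"
    using \<open>setval_onto F\<close> by (auto simp: setval_onto_def setval_inverse_def)
  moreover have "infdist (xs (Suc n)) (setval_inverse F (xs n)) < \<delta>"
    using pseudo by (simp add: pseudo_orbit_def)
  ultimately obtain w where "w \<in> setval_inverse F (xs n)" "dist (xs (Suc n)) w < \<delta>"
    by (rule infdist_lessE)
  then show ?thesis
    using unif by (simp add: setval_inverse_def dist_commute)
qed

lemma orbit_exists:
  assumes "\<And>x. G x \<noteq> {}"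
  shows "\<exists>ys. is_orbit G ys \<and> ys 0 = x"
proof -
  define ys where "ys = rec_nat x (\<lambda>_ y. SOME z. z \<in> G y)"
  have "ys (Suc n) \<in> G (ys n)" for n
    by (simp add: ys_def some_in_eq assms)
  moreover have "ys 0 = x"
    by (simp add: ys_def)
  ultimately show ?thesis
    unfolding is_orbit_def by blast
qed

lemma pseudo_orbit_reverse_append:
  assumes backward: "\<And>n. infdist (xs n) (G (xs (Suc n))) < \<delta>"
    and orb: "is_orbit G ys" "ys 0 = xs 0" and "\<delta> > 0"
  shows "pseudo_orbit G \<delta> (\<lambda>k. if k \<le> N then xs (N - k) else ys (k - N))"
  unfolding pseudo_orbit_def
proof
  fix k
  show "infdist (if Suc k \<le> N then xs (N - Suc k) else ys (Suc k - N))
      (G (if k \<le> N then xs (N - k) else ys (k - N))) < \<delta>"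
  proof (cases "k < N")
    case True
    then show ?thesis using backward[of "N - Suc k"] by (simp add: Suc_diff_Suc)
  next
    case False
    then have "(if k \<le> N then xs (N - k) else ys (k - N)) = ys (k - N)"
      using orb(2) by auto
    moreover have "ys (Suc k - N) \<in> G (ys (k - N))"
      using orb(1) False by (simp add: is_orbit_def Suc_diff_le)
    ultimately show ?thesis
      using False \<open>\<delta> > 0\<close> by simp
  qed
qed

lemma shadowing_reversed_segments:
  fixes F :: "'a::metric_space \<Rightarrow> 'a set"
  assumes "shadowing F" and nonempty: "\<And>x. F x \<noteq> {}" and "\<epsilon> > 0"
  obtains \<delta> where "\<delta> > 0"
    and "\<And>xs N. (\<And>n. infdist (xs n) (F (xs (Suc n))) < \<delta>) \<Longrightarrow>
        \<exists>u. (\<forall>n<N. u (Suc n) \<in> setval_inverse F (u n)) \<and> (\<forall>n\<le>N. dist (xs n) (u n) < \<epsilon>)"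
proof -
  obtain \<delta> where "\<delta> > 0" and shadow: "\<And>zs. pseudo_orbit F \<delta> zs \<Longrightarrow>
      \<exists>ys. is_orbit F ys \<and> (\<forall>n. dist (zs n) (ys n) < \<epsilon>)"
    using \<open>shadowing F\<close>[unfolded shadowing_def, rule_format, OF \<open>\<epsilon> > 0\<close>] by blast
  have "\<exists>u. (\<forall>n<N. u (Suc n) \<in> setval_inverse F (u n)) \<and> (\<forall>n\<le>N. dist (xs n) (u n) < \<epsilon>)"
    if backward: "\<And>n. infdist (xs n) (F (xs (Suc n))) < \<delta>" for xs N
  proof -
    obtain ys where "is_orbit F ys" "ys 0 = xs 0"
      using orbit_exists[of F, OF nonempty] by blast
    then have "pseudo_orbit F \<delta> (\<lambda>k. if k \<le> N then xs (N - k) else ys (k - N))"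
      by (rule pseudo_orbit_reverse_append[of xs F, OF backward _ _ \<open>\<delta> > 0\<close>])
    then obtain zs where zs: "is_orbit F zs"
      and near: "\<forall>k. dist (if k \<le> N then xs (N - k) else ys (k - N)) (zs k) < \<epsilon>"
      using shadow by blast
    have "zs (N - Suc n) \<in> setval_inverse F (zs (N - n))" if "n < N" for n
      using zs[unfolded is_orbit_def, rule_format, of "N - Suc n"] Suc_diff_Suc[OF that]
      by (simp add: setval_inverse_def)
    moreover have "dist (xs n) (zs (N - n)) < \<epsilon>" if "n \<le> N" for n
      using near[rule_format, of "N - n"] that by simp
    ultimately show ?thesis
      by (intro exI[of _ "\<lambda>n. zs (N - n)"]) simp
  qed
  then show thesis
    by (rule that[OF \<open>\<delta> > 0\<close>])
qed

lemma orbit_limit_of_finite_orbits: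
  fixes G :: "'a::metric_space \<Rightarrow> 'a set"
  assumes "compact (UNIV :: 'a set)" and graph: "closed (setval_graph G)"
    and orbits: "\<And>N n. n < N \<Longrightarrow> u N (Suc n) \<in> G (u N n)"
    and near: "\<And>N n. n \<le> N \<Longrightarrow> dist (xs n) (u N n) \<le> e"
  shows "\<exists>v. is_orbit G v \<and> (\<forall>n. dist (xs n) (v n) \<le> e)"
proof -
  have "seq_compact (UNIV :: (nat \<Rightarrow> 'a) set)"
    using compact_UNIV_fun[OF assms(1)] compact_imp_seq_compact by blast
  then obtain v r where r: "strict_mono r" and subseq: "(u \<circ> r) \<longlonglongrightarrow> v"
    using seq_compactE[of UNIV u] by blast
  have "(\<lambda>j. (u \<circ> r) j n) \<longlonglongrightarrow> v n" for n
    by (rule continuous_on_tendsto_compose[OF continuous_on_product_coordinates subseq]) auto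
  then have lim: "(\<lambda>j. u (r j) n) \<longlonglongrightarrow> v n" for n
    by simp
  have large: "eventually (\<lambda>j. n < r j) sequentially" for n
    by (rule eventually_compose_filterlim[OF eventually_gt_at_top filterlim_subseq[OF r]])
  have "v (Suc n) \<in> G (v n)" for n
  proof -
    have "eventually (\<lambda>j. (u (r j) n, u (r j) (Suc n)) \<in> setval_graph G) sequentially"
      using large[of n] by eventually_elim (simp add: setval_graph_def orbits)
    from Lim_in_closed_set[OF graph this _ tendsto_Pair[OF lim lim]] show ?thesis
      by (simp add: setval_graph_def)
  qed
  moreover have "dist (xs n) (v n) \<le> e" for n
  proof -
    have "eventually (\<lambda>j. dist (xs n) (u (r j) n) \<le> e) sequentially"
      using large[of n] by eventually_elim (simp add: near)
    then show ?thesis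
      by (rule tendsto_upperbound[OF tendsto_dist[OF tendsto_const lim] _ trivial_limit_sequentially])
  qed
  ultimately show ?thesis by (auto simp: is_orbit_def)
qed

lemma shadowing_backward_pseudo_orbits:
  fixes F :: "'a::metric_space \<Rightarrow> 'a set"
  assumes "compact (UNIV :: 'a set)" and "shadowing F" and nonempty: "\<And>x. F x \<noteq> {}"
    and graph: "closed (setval_graph F)" and "\<epsilon> > 0"
  obtains \<delta> where "\<delta> > 0"
    and "\<And>xs. (\<And>n. infdist (xs n) (F (xs (Suc n))) < \<delta>) \<Longrightarrow>
        \<exists>ys. is_orbit (setval_inverse F) ys \<and> (\<forall>n. dist (xs n) (ys n) < \<epsilon>)"
proof -
  obtain \<delta> where "\<delta> > 0" and segments: "\<And>xs N. (\<And>n. infdist (xs n) (F (xs (Suc n))) < \<delta>) \<Longrightarrow>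
      \<exists>u. (\<forall>n<N. u (Suc n) \<in> setval_inverse F (u n)) \<and> (\<forall>n\<le>N. dist (xs n) (u n) < \<epsilon>/2)"
    using shadowing_reversed_segments[OF \<open>shadowing F\<close> nonempty half_gt_zero[OF \<open>\<epsilon> > 0\<close>]] by blast
  have "\<exists>ys. is_orbit (setval_inverse F) ys \<and> (\<forall>n. dist (xs n) (ys n) < \<epsilon>)"
    if "\<And>n. infdist (xs n) (F (xs (Suc n))) < \<delta>" for xs
  proof -
    have "\<forall>N. \<exists>u. (\<forall>n<N. u (Suc n) \<in> setval_inverse F (u n)) \<and> (\<forall>n\<le>N. dist (xs n) (u n) < \<epsilon>/2)"
      using segments[of xs, OF that] by blast
    then obtain u where u: "\<forall>N. (\<forall>n<N. u N (Suc n) \<in> setval_inverse F (u N n)) \<and>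
        (\<forall>n\<le>N. dist (xs n) (u N n) < \<epsilon>/2)"
      by (auto dest: choice)
    obtain v where "is_orbit (setval_inverse F) v" and near: "\<forall>n. dist (xs n) (v n) \<le> \<epsilon>/2"
      using orbit_limit_of_finite_orbits[OF assms(1) closed_setval_graph_inverse[OF graph], of u xs]
        u less_imp_le by blast
    moreover have "dist (xs n) (v n) < \<epsilon>" for n
      using near[rule_format, of n] \<open>\<epsilon> > 0\<close> by linarith
    ultimately show ?thesis
      by blast
  qed
  then show thesis
    by (rule that[OF \<open>\<delta> > 0\<close>])
qed

theorem theorem4p7:
  fixes F :: "'a::metric_space \<Rightarrow> 'a set"
  assumes "compact (UNIV :: 'a set)"
    and "setval_map F"
    and "setval_onto F"
    and "setval_continuous F"
    and "shadowing F"
  shows "shadowing (setval_inverse F)"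
  unfolding shadowing_def
proof (intro allI impI)
  fix \<epsilon> :: real assume "\<epsilon> > 0"
  have nonempty: "\<And>x. F x \<noteq> {}" and "\<And>x. closed (F x)"
    using assms(2) by (auto simp: setval_map_def compact_imp_closed)
  moreover have "usc F" "lsc F"
    using assms(4) by (simp_all add: setval_continuous_def)
  ultimately have graph: "closed (setval_graph F)"
    by (simp add: closed_setval_graph_usc)
  obtain \<delta>\<^sub>0 where "\<delta>\<^sub>0 > 0" and backward: "\<And>xs. (\<And>n. infdist (xs n) (F (xs (Suc n))) < \<delta>\<^sub>0) \<Longrightarrow>
      \<exists>ys. is_orbit (setval_inverse F) ys \<and> (\<forall>n. dist (xs n) (ys n) < \<epsilon>)"
    using shadowing_backward_pseudo_orbits[OF assms(1,5) nonempty graph \<open>\<epsilon> > 0\<close>] by blast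
  obtain \<delta> where "\<delta> > 0" and unif: "\<forall>w w' p. dist w w' < \<delta> \<longrightarrow> p \<in> F w \<longrightarrow> infdist p (F w') < \<delta>\<^sub>0"
    using uniform_lsc_compact[OF assms(1) assms(1) graph \<open>lsc F\<close> \<open>\<delta>\<^sub>0 > 0\<close>] by blast
  have "\<exists>ys. is_orbit (setval_inverse F) ys \<and> (\<forall>n. dist (xs n) (ys n) < \<epsilon>)"
    if "pseudo_orbit (setval_inverse F) \<delta> xs" for xs
    using backward pseudo_orbit_inverse_backward_step[OF assms(3) unif that] by blast
  then show "\<exists>\<delta>>0. \<forall>xs. pseudo_orbit (setval_inverse F) \<delta> xs \<longrightarrow>
      (\<exists>ys. is_orbit (setval_inverse F) ys \<and> (\<forall>n. dist (xs n) (ys n) < \<epsilon>))"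
    using \<open>\<delta> > 0\<close> by blast
qed

end
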